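(* Let $\beta$ be a non-negative integer and $k$ a positive integer. If $\beta+k\equiv 0 \pmod{q-1}$, then $L(\chi_t^\beta,-k)=0$; if $\beta+k\not\equiv 0\pmod{q-1}$, then $L(\chi_t^\beta,-k)\neq 0$. Moreover, whenever $\beta+k\equiv 0\pmod{q-1}$, the zero is simple: the derivative $\frac{\partial}{\partial x}z(\chi_t^\beta,x,-k)$ does not vanish at $x=1$.
   Context: Let $q$ be a power of a prime $p$, $A=\mathbb{F}_q[\theta]$, and $A_+(d)$ the set of monic polynomials in $A$ of degree $d$. Let $t$ be an indeterminate and $\chi_t:A\to\mathbb{F}_q[t]$ the $\mathbb{F}_q$-algebra morphism with $\theta\mapsto t$; $\chi_t(a)^0:=1$. For non-negative integers $\beta,k,d$ let $S_d(\chi_t^\beta,k):=\sum_{a\in A_+(d)}\chi_t(a)^\beta a^k\in A[t]$. It is known that $S_d(\chi_t^\beta,k)=0$ for $d$ sufficiently large, so the special polynomial $z(\chi_t^\beta,x,-k):=\sum_{d\ge0}x^{-d}S_d(\chi_t^\beta,k)$ lies in $A[t][x^{-1}]$. Define $L(\chi_t^\beta,-k):=z(\chi_t^\beta,1,-k)\in A[t]$ (the value of Pellarin's $L$-series at $-k$). *)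

theory Defs
  imports "HOL-Computational_Algebra.Polynomial" "HOL-Library.Cardinality"
begin

(* F_q is modelled by a finite field type 'a (q = CARD('a)).
   A = F_q[theta] is 'a poly.  A[t] is ('a poly) poly: the OUTER variable is t,
   the coefficients lie in A.  Polynomials in x^{-1} over A[t] are
   ('a poly poly) poly, the outer variable being y = x^{-1}. *)

definition monic_deg :: "nat \<Rightarrow> ('a::field) poly set" where
  "monic_deg d = {a. lead_coeff a = 1 \<and> degree a = d}"

text \<open>chi_t : A -> F_q[t] (subset of A[t]), theta |-> t.\<close>
definition chi_t :: "('a::field) poly \<Rightarrow> 'a poly poly" where
  "chi_t a = map_poly (\<lambda>c. [:c:]) a"

definition S_d :: "nat \<Rightarrow> nat \<Rightarrow> nat \<Rightarrow> ('a::{field,finite}) poly poly" where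
  "S_d d \<beta> k = (\<Sum>a\<in>monic_deg d. chi_t a ^ \<beta> * [:a ^ k:])"

text \<open>Special polynomial z(chi_t^beta, x, -k) = sum_d x^{-d} S_d, as a polynomial
  in the variable y = x^{-1} (S_d vanishes for all large d, so the support is finite).\<close>
definition z_poly :: "nat \<Rightarrow> nat \<Rightarrow> ('a::{field,finite}) poly poly poly" where
  "z_poly \<beta> k = (\<Sum>d\<in>{d. (S_d d \<beta> k :: 'a poly poly) \<noteq> 0}. monom (S_d d \<beta> k) d)"

definition L_val :: "nat \<Rightarrow> nat \<Rightarrow> ('a::{field,finite}) poly poly" where
  "L_val \<beta> k = poly (z_poly \<beta> k) 1"

text \<open>Value at x = 1 of d/dx z(chi_t^beta, x, -k).  Since z(x) = Z(x^{-1}) with Z = z_poly,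
  the chain rule gives d/dx z(x) = -x^{-2} Z'(x^{-1}), whose value at x = 1 is -Z'(1).\<close>
definition z_deriv_at_1 :: "nat \<Rightarrow> nat \<Rightarrow> ('a::{field,finite}) poly poly" where
  "z_deriv_at_1 \<beta> k = - poly (pderiv (z_poly \<beta> k)) 1"

end

theory Submission
  imports Defs
begin

text \<open>
  Every summand of \<open>S\<^sub>d(\<chi>\<^sub>t\<^sup>\<beta>, k)\<close> is a polynomial of degree \<open>\<beta> + k\<close> in the coefficients of
  \<open>a\<close>, and such a polynomial sums to zero over \<open>\<FF>\<^sub>q\<^sup>D\<close> as soon as its degree is below
  \<open>D(q - 1)\<close>, because \<open>\<Sum>\<^sub>c c\<^sup>m = 0\<close> for \<open>m < q - 1\<close>. Hence \<open>S\<^sub>d = 0\<close> for \<open>d > \<beta> + k\<close>.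
  Applied to all polynomials of degree \<open>\<le> \<beta> + k\<close> and using homogeneity
  \<open>a \<mapsto> c a\<close>, the same vanishing gives \<open>(\<Sum>\<^sub>c\<^sub>\<noteq>\<^sub>0 c\<^sup>\<beta>\<^sup>+\<^sup>k) L = 0\<close>, and that power sum is \<open>-1\<close>
  when \<open>q - 1\<close> divides \<open>\<beta> + k\<close>.
  Conversely, setting \<open>\<theta> = t = 0\<close> kills \<open>S\<^sub>d\<close> for \<open>d \<ge> 2\<close> and leaves \<open>S\<^sub>0 = 1\<close>,
  \<open>S\<^sub>1 = \<Sum>\<^sub>c c\<^sup>\<beta>\<^sup>+\<^sup>k\<close>; so \<open>L\<close> becomes \<open>1 + \<Sum>\<^sub>c c\<^sup>\<beta>\<^sup>+\<^sup>k\<close> and \<open>\<partial>z/\<partial>x\<close> at \<open>x = 1\<close> becomes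
  \<open>-\<Sum>\<^sub>c c\<^sup>\<beta>\<^sup>+\<^sup>k\<close>, which settle the remaining two claims.
\<close>

section \<open>Power sums over a finite field\<close>

lemma of_nat_CARD_eq_0: "of_nat CARD('a::{field,finite}) = (0::'a)"
proof -
  have "(\<Sum>x\<in>(UNIV::'a set). x + 1) = (\<Sum>x\<in>UNIV. x)"
    by (rule sum.reindex_bij_witness[of _ "\<lambda>x. x - 1" "\<lambda>x. x + 1"]) auto
  then have "(\<Sum>x\<in>(UNIV::'a set). (1::'a)) = 0" by (simp add: sum.distrib)
  then show ?thesis by simp
qed

lemma CARD_ge_2: "CARD('a::{field,finite}) \<ge> 2"
proof -
  have "card {0::'a, 1} \<le> CARD('a)" by (intro card_mono) auto
  then show ?thesis by simp
qed

lemma le_mult_CARD_minus_1: "D \<le> D * (CARD('a::{field,finite}) - 1)"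
proof -
  have "1 \<le> CARD('a) - 1" using CARD_ge_2[where 'a='a] by simp
  then show ?thesis by (metis mult.right_neutral mult_le_mono2)
qed

lemma power_CARD_minus_1:
  fixes c :: "'a::{field,finite}"
  assumes "c \<noteq> 0"
  shows "c ^ (CARD('a) - 1) = 1"
proof -
  let ?U = "UNIV - {0::'a}"
  have "(\<Prod>x\<in>?U. c * x) = (\<Prod>x\<in>?U. x)"
    by (rule prod.reindex_bij_witness[of _ "\<lambda>x. x / c" "\<lambda>x. c * x"]) (use assms in auto)
  moreover have "(\<Prod>x\<in>?U. c * x) = c ^ card ?U * (\<Prod>x\<in>?U. x)"
    by (simp add: prod.distrib)
  moreover have "(\<Prod>x\<in>?U. x) \<noteq> 0" by simp
  moreover have "card ?U = CARD('a) - 1" by (simp add: card_Diff_subset)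
  ultimately show ?thesis by simp
qed

text \<open>Since \<open>x\<^sup>m - 1\<close> has at most \<open>m < q - 1\<close> roots, some \<open>g \<noteq> 0\<close> has \<open>g\<^sup>m \<noteq> 1\<close>,
  and substituting \<open>c \<mapsto> g c\<close> multiplies the sum by \<open>g\<^sup>m\<close>.\<close>
lemma sum_UNIV_power_eq_0_if_less:
  assumes "0 < m" "m < CARD('a::{field,finite}) - 1"
  shows "(\<Sum>c\<in>(UNIV::'a set). c ^ m) = 0"
proof -
  define p :: "'a poly" where "p = monom 1 m - 1"
  have "degree p = m"
    using degree_add_eq_left[of "-1" "monom 1 m"] assms by (simp add: p_def degree_monom_eq)
  then have "p \<noteq> 0" using assms by auto
  then have "card {x. poly p x = 0} \<le> m"
    using card_poly_roots_bound[of p] \<open>degree p = m\<close> by simp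
  moreover have "card (UNIV - {0::'a}) = CARD('a) - 1" by (simp add: card_Diff_subset)
  ultimately have "\<not> UNIV - {0::'a} \<subseteq> {x. poly p x = 0}"
    using assms(2) card_mono[of "{x. poly p x = 0}" "UNIV - {0::'a}"] by auto
  then obtain g :: 'a where g: "g \<noteq> 0" "g ^ m \<noteq> 1" by (auto simp: p_def poly_monom)
  have "(\<Sum>c\<in>(UNIV::'a set). (g * c) ^ m) = (\<Sum>c\<in>UNIV. c ^ m)"
    by (rule sum.reindex_bij_witness[of _ "\<lambda>x. x / g" "\<lambda>x. g * x"]) (use g in auto)
  then have "g ^ m * (\<Sum>c\<in>(UNIV::'a set). c ^ m) = 1 * (\<Sum>c\<in>UNIV. c ^ m)"
    by (simp add: power_mult_distrib sum_distrib_left)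
  then show ?thesis using g by (metis mult_cancel_right)
qed

lemma sum_UNIV_power:
  "(\<Sum>c\<in>(UNIV::'a::{field,finite} set). c ^ n) = (if 0 < n \<and> (CARD('a) - 1) dvd n then -1 else 0)"
proof -
  let ?q = "CARD('a) - 1"
  have q: "?q > 0" using CARD_ge_2[where 'a='a] by simp
  have power_eq: "c ^ n = c ^ (n mod ?q)" if "0 < n" "c \<noteq> 0" for c :: 'a
  proof -
    have "n = ?q * (n div ?q) + n mod ?q" by simp
    then have "c ^ n = (c ^ ?q) ^ (n div ?q) * c ^ (n mod ?q)"
      by (metis power_add power_mult)
    then show ?thesis using power_CARD_minus_1[OF \<open>c \<noteq> 0\<close>] by simp
  qed
  consider "n = 0" | "0 < n" "?q dvd n" | "0 < n" "\<not> ?q dvd n" by blast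
  then show ?thesis
  proof cases
    case 1
    then show ?thesis by (simp add: of_nat_CARD_eq_0)
  next
    case 2
    then have "c ^ n = (if c = 0 then 0 else 1)" for c :: 'a
      using power_eq by (auto simp: dvd_eq_mod_eq_0)
    then have "(\<Sum>c\<in>(UNIV::'a set). c ^ n) = (\<Sum>c\<in>UNIV - {0::'a}. 1)"
      by (intro sum.mono_neutral_cong_right) auto
    also have "\<dots> = -1"
      using CARD_ge_2[where 'a='a] of_nat_CARD_eq_0[where 'a='a] by (simp add: card_Diff_subset of_nat_diff)
    finally show ?thesis using 2 by simp
  next
    case 3
    then have r: "0 < n mod ?q" "n mod ?q < ?q" using q by (auto simp: dvd_eq_mod_eq_0)
    have "c ^ n = c ^ (n mod ?q)" for c :: 'a
      using power_eq[OF \<open>0 < n\<close>, of c] r \<open>0 < n\<close> by (cases "c = 0") (auto simp: zero_power)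
    then show ?thesis using sum_UNIV_power_eq_0_if_less[OF r] 3 by simp
  qed
qed

section \<open>Polynomial functions of the coefficients\<close>

definition const2 :: "'a::field \<Rightarrow> 'a poly poly" where
  "const2 c = [:[:c:]:]"

lemma const2_add [simp]: "const2 (x + y) = const2 x + const2 y"
  and const2_mult [simp]: "const2 (x * y) = const2 x * const2 y"
  and const2_0 [simp]: "const2 0 = 0"
  and const2_1 [simp]: "const2 1 = 1"
  and const2_uminus [simp]: "const2 (- x) = - const2 x"
  and const2_eq_0_iff [simp]: "const2 x = 0 \<longleftrightarrow> x = 0"
  and const2_mult_eq_smult: "const2 x * p = smult [:x:] p"
  by (simp_all add: const2_def one_pCons)

lemma const2_power [simp]: "const2 (x ^ m) = const2 x ^ m"
  by (induction m) simp_all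

lemma const2_sum [simp]: "const2 (sum f A) = (\<Sum>a\<in>A. const2 (f a))"
  by (induction A rule: infinite_finite_induct) simp_all

definition fq_linear :: "('a::field poly \<Rightarrow> 'a poly poly) \<Rightarrow> bool" where
  "fq_linear e \<longleftrightarrow> (\<forall>a b. e (a + b) = e a + e b) \<and> (\<forall>c a. e (smult c a) = const2 c * e a)"

text \<open>\<open>polyfun n F\<close> says that \<open>F\<close> is a polynomial of degree \<open>\<le> n\<close> in the coefficients
  of its argument.\<close>
inductive polyfun :: "nat \<Rightarrow> ('a::field poly \<Rightarrow> 'a poly poly) \<Rightarrow> bool" where
  const: "polyfun n (\<lambda>_. K)"
| linear_mult: "fq_linear e \<Longrightarrow> polyfun n F \<Longrightarrow> polyfun (Suc n) (\<lambda>b. e b * F b)"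
| add: "polyfun n F \<Longrightarrow> polyfun n G \<Longrightarrow> polyfun n (\<lambda>b. F b + G b)"
| mono: "polyfun n F \<Longrightarrow> polyfun (Suc n) F"

lemma polyfun_mono_le: "polyfun n F \<Longrightarrow> n \<le> m \<Longrightarrow> polyfun m F"
  by (induction m) (auto simp: le_Suc_eq intro: polyfun.mono)

lemma polyfun_const_mult: "polyfun n F \<Longrightarrow> polyfun n (\<lambda>b. K * F b)"
proof (induction rule: polyfun.induct)
  case (const n K')
  then show ?case by (rule polyfun.const)
next
  case (linear_mult e n F)
  have "(\<lambda>b. K * (e b * F b)) = (\<lambda>b. e b * (K * F b))" by (simp add: ac_simps)
  then show ?case using linear_mult by (simp add: polyfun.linear_mult)
next
  case (add n F G)
  then show ?case by (simp add: distrib_left polyfun.add)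
next
  case (mono n F)
  then show ?case by (simp add: polyfun.mono)
qed

lemma polyfun_affine_power_mult:
  assumes "polyfun n G" "fq_linear e"
  shows "polyfun (n + j) (\<lambda>b. (K + e b) ^ j * G b)"
proof (induction j)
  case 0
  then show ?case using assms(1) by simp
next
  case (Suc j)
  let ?H = "\<lambda>b. (K + e b) ^ j * G b"
  have "polyfun (Suc (n + j)) (\<lambda>b. K * ?H b + e b * ?H b)"
    by (intro polyfun.add polyfun.mono polyfun_const_mult polyfun.linear_mult assms(2) Suc)
  moreover have "(\<lambda>b. K * ?H b + e b * ?H b) = (\<lambda>b. (K + e b) ^ Suc j * G b)"
    by (simp add: algebra_simps)
  ultimately show ?case by simp
qed

lemma fq_linear_monom: "fq_linear e \<Longrightarrow> e (monom c D) = const2 c * e (monom 1 D)"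
  by (metis fq_linear_def mult.right_neutral smult_monom)

lemma coeff_linear_poly_mult:
  "coeff ([:x, y:] * p) m = x * coeff p m + (if m = 0 then 0 else y * coeff p (m - 1))"
  by (cases m) (simp_all add: mult_pCons_left)

definition expansion_along_monom ::
    "nat \<Rightarrow> nat \<Rightarrow> ('a::field poly \<Rightarrow> 'a poly poly) \<Rightarrow> ('a poly \<Rightarrow> 'a poly poly poly) \<Rightarrow> bool" where
  "expansion_along_monom D n F Q \<longleftrightarrow>
     (\<forall>b. degree (Q b) \<le> n) \<and> (\<forall>m. polyfun (n - m) (\<lambda>b. coeff (Q b) m))
     \<and> (\<forall>b c. F (b + monom c D) = poly (Q b) (const2 c))"

lemma expansion_along_monom_const: "expansion_along_monom D n (\<lambda>_. K) (\<lambda>_. [:K:])"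
  by (auto simp: expansion_along_monom_def intro: polyfun.const)

lemma expansion_along_monom_mono:
  "expansion_along_monom D n F Q \<Longrightarrow> expansion_along_monom D (Suc n) F Q"
  unfolding expansion_along_monom_def
  by (blast intro: polyfun_mono_le diff_le_mono le_SucI)

lemma expansion_along_monom_add:
  assumes "expansion_along_monom D n F Q" "expansion_along_monom D n G R"
  shows "expansion_along_monom D n (\<lambda>b. F b + G b) (\<lambda>b. Q b + R b)"
proof -
  have "degree (Q b + R b) \<le> n" for b
    using assms unfolding expansion_along_monom_def by (blast intro: degree_add_le)
  moreover have "polyfun (n - m) (\<lambda>b. coeff (Q b + R b) m)" for m
    using assms by (auto simp: expansion_along_monom_def intro: polyfun.add)
  ultimately show ?thesis
    using assms by (simp add: expansion_along_monom_def)
qed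

lemma expansion_along_monom_linear_mult:
  assumes e: "fq_linear e" and Q: "expansion_along_monom D n F Q"
  shows "expansion_along_monom D (Suc n) (\<lambda>b. e b * F b) (\<lambda>b. [:e b, e (monom 1 D):] * Q b)"
proof -
  define y where "y = e (monom 1 D)"
  from Q have deg: "\<forall>b. degree (Q b) \<le> n" and coeffs: "\<forall>m. polyfun (n - m) (\<lambda>b. coeff (Q b) m)"
    and F: "\<forall>b c. F (b + monom c D) = poly (Q b) (const2 c)"
    by (simp_all add: expansion_along_monom_def)
  have "degree ([:e b, y:] * Q b) \<le> Suc n" for b
  proof -
    have "degree ([:e b, y:] * Q b) \<le> degree [:e b, y:] + degree (Q b)" by (rule degree_mult_le)
    moreover have "degree [:e b, y:] \<le> 1" by simp
    ultimately show ?thesis using deg by (metis add_le_mono plus_1_eq_Suc order.trans)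
  qed
  moreover have "polyfun (Suc n - m) (\<lambda>b. coeff ([:e b, y:] * Q b) m)" for m
  proof (cases m)
    case 0
    then show ?thesis using polyfun.linear_mult[OF e coeffs[rule_format, of 0]]
      by (simp add: coeff_linear_poly_mult)
  next
    case (Suc m')
    have y_part: "polyfun (n - m') (\<lambda>b. y * coeff (Q b) m')"
      using polyfun_const_mult[OF coeffs[rule_format, of m']] .
    show ?thesis
    proof (cases "m' < n")
      case True
      have "polyfun (Suc (n - Suc m')) (\<lambda>b. e b * coeff (Q b) (Suc m'))"
        using polyfun.linear_mult[OF e coeffs[rule_format, of "Suc m'"]] .
      then have "polyfun (n - m') (\<lambda>b. e b * coeff (Q b) (Suc m') + y * coeff (Q b) m')"
        using True y_part by (intro polyfun.add) (auto simp: Suc_diff_Suc)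
      then show ?thesis using Suc by (simp add: coeff_linear_poly_mult)
    next
      case False
      then have "coeff (Q b) (Suc m') = 0" for b
        using deg by (intro coeff_eq_0) (meson le_less_trans not_less less_Suc_eq_le)
      then show ?thesis using Suc y_part by (simp add: coeff_linear_poly_mult)
    qed
  qed
  moreover have "e (b + monom c D) * F (b + monom c D) = poly ([:e b, y:] * Q b) (const2 c)" for b c
  proof -
    have "e (b + monom c D) = e b + e (monom c D)"
      using e unfolding fq_linear_def by blast
    also have "\<dots> = e b + const2 c * y"
      unfolding y_def fq_linear_monom[OF e, of c] ..
    finally show ?thesis using F by (simp add: algebra_simps)
  qed
  ultimately show ?thesis unfolding expansion_along_monom_def y_def by blast
qed

lemma polyfun_expansion_along_monom:
  "polyfun n F \<Longrightarrow> \<exists>Q. expansion_along_monom D n F Q"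
proof (induction rule: polyfun.induct)
  case (const n K)
  then show ?case using expansion_along_monom_const by blast
next
  case (linear_mult e n F)
  then show ?case using expansion_along_monom_linear_mult by blast
next
  case (add n F G)
  then show ?case using expansion_along_monom_add by blast
next
  case (mono n F)
  then show ?case using expansion_along_monom_mono by blast
qed

definition polys_below :: "nat \<Rightarrow> 'a::zero poly set" where
  "polys_below D = {a. \<forall>i\<ge>D. coeff a i = 0}"

lemma polys_below_0: "polys_below 0 = {0}"
  by (auto simp: polys_below_def poly_eq_iff)

lemma polys_below_Suc:
  "(polys_below (Suc D) :: 'a::ab_group_add poly set)
     = (\<lambda>(b, c). b + monom c D) ` (polys_below D \<times> UNIV)" (is "?L = ?R")
proof
  show "?R \<subseteq> ?L"
    by (auto simp: polys_below_def)
  show "?L \<subseteq> ?R"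
  proof
    fix a assume "a \<in> ?L"
    then have "a - monom (coeff a D) D \<in> polys_below D"
      by (auto simp: polys_below_def)
    moreover have "a = (a - monom (coeff a D) D) + monom (coeff a D) D" by simp
    ultimately show "a \<in> ?R"
      by (intro image_eqI[of _ _ "(a - monom (coeff a D) D, coeff a D)"]) auto
  qed
qed

lemma inj_on_add_monom:
  "inj_on (\<lambda>(b, c). b + monom c D) ((polys_below D :: 'a::ab_group_add poly set) \<times> UNIV)"
proof (rule inj_onI, clarify)
  fix b b' :: "'a poly" and c c' :: 'a
  assume b: "b \<in> polys_below D" "b' \<in> polys_below D" and eq: "b + monom c D = b' + monom c' D"
  have "coeff (b + monom c D) D = coeff (b' + monom c' D) D" using eq by simp
  then have "c = c'" using b by (simp add: polys_below_def)
  then show "b = b' \<and> c = c'" using eq by simp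
qed

lemma finite_polys_below: "finite (polys_below D :: 'a::{ab_group_add,finite} poly set)"
  by (induction D) (simp_all add: polys_below_0 polys_below_Suc)

lemma sum_polys_below_Suc:
  "sum f (polys_below (Suc D) :: 'a::{ab_group_add,finite} poly set)
     = (\<Sum>b\<in>polys_below D. \<Sum>c\<in>UNIV. f (b + monom c D))"
  unfolding polys_below_Suc sum.reindex[OF inj_on_add_monom]
  by (simp add: sum.cartesian_product split_def)

lemma poly_eq_sum_upto:
  fixes p :: "'a::comm_semiring_1 poly"
  assumes "degree p \<le> n"
  shows "poly p x = (\<Sum>i\<le>n. coeff p i * x ^ i)"
  unfolding poly_altdef using assms
  by (intro sum.mono_neutral_left) (auto simp: coeff_eq_0)

text \<open>Expanding along the top coefficient \<open>c\<close>, a term \<open>c\<^sup>m\<close> is killed by \<open>\<Sum>\<^sub>c c\<^sup>m = 0\<close> when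
  \<open>m < q - 1\<close>, and otherwise by induction, its coefficient having degree \<open>n - m < D (q - 1)\<close>.\<close>
lemma sum_polys_below_polyfun_eq_0:
  fixes F :: "'a::{field,finite} poly \<Rightarrow> 'a poly poly"
  assumes "polyfun n F" "n < D * (CARD('a) - 1)"
  shows "(\<Sum>a\<in>polys_below D. F a) = 0"
  using assms
proof (induction D arbitrary: n F)
  case 0
  then show ?case by simp
next
  case (Suc D)
  obtain Q where Q: "\<forall>b. degree (Q b) \<le> n" "\<forall>m. polyfun (n - m) (\<lambda>b. coeff (Q b) m)"
    "\<forall>b c. F (b + monom c D) = poly (Q b) (const2 c)"
    using polyfun_expansion_along_monom[OF Suc.prems(1), of D]
    unfolding expansion_along_monom_def by blast
  have "(\<Sum>a\<in>polys_below (Suc D). F a)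
      = (\<Sum>b\<in>polys_below D. \<Sum>c\<in>UNIV. \<Sum>m\<le>n. coeff (Q b) m * const2 c ^ m)"
    using poly_eq_sum_upto[OF Q(1)[rule_format]] Q(3) by (simp add: sum_polys_below_Suc)
  also have "\<dots> = (\<Sum>b\<in>polys_below D. \<Sum>m\<le>n. \<Sum>c\<in>UNIV. coeff (Q b) m * const2 c ^ m)"
    by (intro sum.cong refl sum.swap)
  also have "\<dots> = (\<Sum>m\<le>n. \<Sum>b\<in>polys_below D. \<Sum>c\<in>UNIV. coeff (Q b) m * const2 c ^ m)"
    by (rule sum.swap)
  also have "\<dots> = (\<Sum>m\<le>n. (\<Sum>b\<in>polys_below D. coeff (Q b) m) * const2 (\<Sum>c\<in>UNIV. c ^ m))"
    by (simp add: sum_product)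
  also have "\<dots> = 0"
  proof (intro sum.neutral ballI)
    fix m assume m: "m \<in> {..n}"
    show "(\<Sum>b\<in>polys_below D. coeff (Q b) m) * const2 (\<Sum>c\<in>UNIV. c ^ m) = 0"
    proof (cases "m < CARD('a) - 1")
      case True
      then have "(\<Sum>c\<in>(UNIV::'a set). c ^ m) = 0"
        unfolding sum_UNIV_power by (auto dest: dvd_imp_le)
      then show ?thesis by simp
    next
      case False
      then have "n - m < D * (CARD('a) - 1)" using Suc.prems(2) m by auto
      then show ?thesis using Suc.IH[OF Q(2)[rule_format, of m]] by simp
    qed
  qed
  finally show ?case .
qed

section \<open>Vanishing of the power sums \<open>S\<^sub>d\<close>\<close>

definition S_summand :: "nat \<Rightarrow> nat \<Rightarrow> 'a::field poly \<Rightarrow> 'a poly poly" where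
  "S_summand \<beta> k a = chi_t a ^ \<beta> * [:a ^ k:]"

lemma const_poly_power: "[:a ^ k:] = [:a:] ^ k"
  by (metis monom_0 monom_power mult_zero_left)

lemma fq_linear_chi_t: "fq_linear chi_t"
  unfolding fq_linear_def const2_mult_eq_smult
  by (auto intro!: poly_eqI simp: chi_t_def coeff_map_poly mult.commute)

lemma fq_linear_const_poly: "fq_linear (\<lambda>a. [:a:])"
  unfolding fq_linear_def const2_mult_eq_smult by simp

lemma polyfun_S_summand: "polyfun (\<beta> + k) (\<lambda>b. S_summand \<beta> k (a + b))"
proof -
  have "polyfun (0 + k) (\<lambda>b. ([:a:] + [:b:]) ^ k * 1)"
    by (rule polyfun_affine_power_mult[OF polyfun.const fq_linear_const_poly])
  then have "polyfun (k + \<beta>) (\<lambda>b. (chi_t a + chi_t b) ^ \<beta> * (([:a:] + [:b:]) ^ k * 1))"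
    by (intro polyfun_affine_power_mult fq_linear_chi_t) simp
  moreover have "chi_t (a + b) = chi_t a + chi_t b" for b
    using fq_linear_chi_t unfolding fq_linear_def by blast
  ultimately show ?thesis
    by (simp add: S_summand_def const_poly_power add.commute)
qed

lemma S_summand_smult: "S_summand \<beta> k (smult c a) = const2 c ^ (\<beta> + k) * S_summand \<beta> k a"
proof -
  have "chi_t (smult c a) = const2 c * chi_t a" "[:smult c a:] = const2 c * [:a:]"
    using fq_linear_chi_t fq_linear_const_poly unfolding fq_linear_def by blast+
  then show ?thesis
    unfolding S_summand_def const_poly_power by (simp only: power_mult_distrib power_add mult_ac)
qed

lemma monic_deg_eq_image:
  "(monic_deg d :: 'a::field poly set) = (\<lambda>b. monom 1 d + b) ` polys_below d" (is "?L = ?R")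
proof
  show "?R \<subseteq> ?L"
  proof clarify
    fix b :: "'a poly" assume b: "b \<in> polys_below d"
    then have c: "coeff (monom 1 d + b) d = 1" by (simp add: polys_below_def)
    have "degree (monom 1 d + b) \<le> d"
      using b by (intro degree_le) (auto simp: polys_below_def)
    moreover have "d \<le> degree (monom 1 d + b)" using c by (intro le_degree) simp
    ultimately show "monom 1 d + b \<in> ?L" using c by (simp add: monic_deg_def)
  qed
  show "?L \<subseteq> ?R"
  proof
    fix a assume "a \<in> ?L"
    then have "a - monom 1 d \<in> polys_below d"
      by (auto simp: polys_below_def monic_deg_def coeff_eq_0)
    then show "a \<in> ?R"
      by (intro image_eqI[of _ _ "a - monom 1 d"]) auto
  qed
qed

lemma finite_monic_deg: "finite (monic_deg d :: 'a::{field,finite} poly set)"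
  unfolding monic_deg_eq_image by (simp add: finite_polys_below)

lemma S_d_eq_sum_polys_below: "S_d d \<beta> k = (\<Sum>b\<in>polys_below d. S_summand \<beta> k (monom 1 d + b))"
  unfolding S_d_def S_summand_def monic_deg_eq_image by (simp add: sum.reindex)

lemma S_d_eq_0:
  assumes "\<beta> + k < d"
  shows "(S_d d \<beta> k :: 'a::{field,finite} poly poly) = 0"
proof -
  have "\<beta> + k < d * (CARD('a) - 1)"
    using le_mult_CARD_minus_1[where 'a='a, of d] assms by linarith
  then show ?thesis
    unfolding S_d_eq_sum_polys_below by (rule sum_polys_below_polyfun_eq_0[OF polyfun_S_summand])
qed

lemma S_d_support_subset:
  "\<beta> + k \<le> N \<Longrightarrow> {d. (S_d d \<beta> k :: 'a::{field,finite} poly poly) \<noteq> 0} \<subseteq> {..N}"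
  using S_d_eq_0 by (force simp: not_le[symmetric])

lemma L_val_eq_sum_S_d:
  assumes "\<beta> + k \<le> N"
  shows "(L_val \<beta> k :: 'a::{field,finite} poly poly) = (\<Sum>d\<le>N. S_d d \<beta> k)"
proof -
  from S_d_support_subset[OF assms] show ?thesis
    unfolding L_val_def z_poly_def poly_sum poly_monom power_one mult_1_right
    by (intro sum.mono_neutral_left) auto
qed

lemma pderiv_sum: "pderiv (sum f A) = (\<Sum>x\<in>A. pderiv (f x))"
  using higher_pderiv_sum[of 1 f A] by simp

lemma z_deriv_at_1_eq_sum_S_d:
  assumes "\<beta> + k \<le> N"
  shows "(z_deriv_at_1 \<beta> k :: 'a::{field,finite} poly poly) = - (\<Sum>d\<le>N. of_nat d * S_d d \<beta> k)"
proof -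
  from S_d_support_subset[OF assms]
  have "poly (pderiv (z_poly \<beta> k)) 1 = (\<Sum>d\<le>N. of_nat d * (S_d d \<beta> k :: 'a poly poly))"
    unfolding z_poly_def
    by (simp add: poly_sum poly_monom pderiv_sum pderiv_monom) (intro sum.mono_neutral_left; auto)
  then show ?thesis
    unfolding z_deriv_at_1_def by simp
qed

section \<open>Specialisation at \<open>\<theta> = t = 0\<close>\<close>

definition eval_origin :: "'a::comm_semiring_1 poly poly \<Rightarrow> 'a" where
  "eval_origin X = poly (poly X 0) 0"

lemma eval_origin_0 [simp]: "eval_origin 0 = 0"
  and eval_origin_add [simp]: "eval_origin (X + Y) = eval_origin X + eval_origin Y"
  and eval_origin_mult [simp]: "eval_origin (X * Y) = eval_origin X * eval_origin Y"
  and eval_origin_sum [simp]: "eval_origin (sum f A) = (\<Sum>a\<in>A. eval_origin (f a))"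
  and eval_origin_of_nat [simp]: "eval_origin (of_nat n) = of_nat n"
  by (simp_all add: eval_origin_def poly_sum)

lemma eval_origin_uminus [simp]: "eval_origin (- X) = - eval_origin (X :: 'a::comm_ring_1 poly poly)"
  by (simp add: eval_origin_def)

lemma eval_origin_S_summand: "eval_origin (S_summand \<beta> k a) = coeff a 0 ^ (\<beta> + k)"
proof -
  have "poly (chi_t a) 0 = [:coeff a 0:]" "poly a 0 = coeff a 0"
    by (simp_all add: poly_0_coeff_0 chi_t_def coeff_map_poly)
  then show ?thesis
    by (simp add: eval_origin_def S_summand_def poly_power power_add const_poly_power[symmetric])
qed

text \<open>For \<open>d \<ge> 2\<close> the constant term does not depend on the coefficient of \<open>\<theta>\<^sup>d\<^sup>-\<^sup>1\<close>,
  so summing over that coefficient contributes the factor \<open>q = 0\<close>.\<close>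
lemma eval_origin_S_d:
  "eval_origin (S_d d \<beta> k :: 'a::{field,finite} poly poly) =
     (if d = 0 then 1 else if d = 1 then (\<Sum>c\<in>(UNIV::'a set). c ^ (\<beta> + k)) else 0)"
proof -
  have S: "eval_origin (S_d d \<beta> k :: 'a poly poly)
      = (\<Sum>b\<in>polys_below d. coeff (monom 1 d + b) 0 ^ (\<beta> + k))"
    unfolding S_d_eq_sum_polys_below by (simp add: eval_origin_S_summand)
  consider "d = 0" | "d = 1" | D where "d = Suc (Suc D)"
    by (metis One_nat_def not0_implies_Suc)
  then show ?thesis
  proof cases
    case 1
    then show ?thesis using S by (simp add: polys_below_0)
  next
    case 2
    then show ?thesis using S by (simp add: sum_polys_below_Suc polys_below_0)
  next
    case 3
    have "(\<Sum>b\<in>polys_below d. coeff (monom 1 d + b) 0 ^ (\<beta> + k))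
        = (\<Sum>b\<in>polys_below (Suc (Suc D)). coeff b 0 ^ (\<beta> + k) :: 'a)"
      unfolding 3 by simp
    also have "\<dots> = (\<Sum>b\<in>polys_below (Suc D). \<Sum>c\<in>(UNIV::'a set). coeff b 0 ^ (\<beta> + k))"
      unfolding sum_polys_below_Suc[of _ "Suc D"] by simp
    also have "\<dots> = 0" by (simp add: of_nat_CARD_eq_0)
    finally show ?thesis using S 3 by simp
  qed
qed

lemma eval_origin_sum_S_d:
  assumes "1 \<le> N"
  shows "(\<Sum>d\<le>N. w d * eval_origin (S_d d \<beta> k :: 'a::{field,finite} poly poly))
       = w 0 + w 1 * (\<Sum>c\<in>(UNIV::'a set). c ^ (\<beta> + k))"
proof -
  have "(\<Sum>d\<le>N. w d * eval_origin (S_d d \<beta> k :: 'a poly poly))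
      = (\<Sum>d\<in>{0, 1}. w d * eval_origin (S_d d \<beta> k :: 'a poly poly))"
    using assms by (intro sum.mono_neutral_right) (auto simp: eval_origin_S_d)
  then show ?thesis by (simp add: eval_origin_S_d)
qed

lemma eval_origin_L_val:
  "eval_origin (L_val \<beta> k :: 'a::{field,finite} poly poly) = 1 + (\<Sum>c\<in>(UNIV::'a set). c ^ (\<beta> + k))"
proof -
  have "eval_origin (L_val \<beta> k :: 'a poly poly)
      = (\<Sum>d\<le>Suc (\<beta> + k). 1 * eval_origin (S_d d \<beta> k :: 'a poly poly))"
    by (simp add: L_val_eq_sum_S_d[of \<beta> k "Suc (\<beta> + k)"] del: sum.atMost_Suc)
  then show ?thesis by (simp only: eval_origin_sum_S_d[of "Suc (\<beta> + k)"]) simp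
qed

lemma eval_origin_z_deriv_at_1:
  "eval_origin (z_deriv_at_1 \<beta> k :: 'a::{field,finite} poly poly) = - (\<Sum>c\<in>(UNIV::'a set). c ^ (\<beta> + k))"
proof -
  have "eval_origin (z_deriv_at_1 \<beta> k :: 'a poly poly)
      = - (\<Sum>d\<le>Suc (\<beta> + k). of_nat d * eval_origin (S_d d \<beta> k :: 'a poly poly))"
    by (simp add: z_deriv_at_1_eq_sum_S_d[of \<beta> k "Suc (\<beta> + k)"] del: sum.atMost_Suc)
  then show ?thesis by (simp only: eval_origin_sum_S_d[of "Suc (\<beta> + k)"]) simp
qed

section \<open>Vanishing of \<open>L\<close> at trivial zeros\<close>

lemma bij_betw_smult_monic:
  "bij_betw (\<lambda>(c, m). smult c m) ((UNIV - {0}) \<times> (\<Union>d\<le>N. monic_deg d))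
     (polys_below (Suc N) - {0 :: 'a::field poly})" (is "bij_betw ?f ?S ?T")
  unfolding bij_betw_def
proof
  show "inj_on ?f ?S"
  proof (rule inj_onI)
    fix x y assume "x \<in> ?S" "y \<in> ?S" and eq: "?f x = ?f y"
    then obtain c c' m m' where xy: "x = (c, m)" "y = (c', m')" and "c \<noteq> 0" "c' \<noteq> 0"
      and "lead_coeff m = 1" "lead_coeff m' = 1"
      by (auto simp: monic_deg_def)
    then have "smult c m = smult c' m'" using eq by simp
    moreover from this have "c = c'"
      using \<open>lead_coeff m = 1\<close> \<open>lead_coeff m' = 1\<close> by (metis lead_coeff_smult mult.right_neutral)
    ultimately show "x = y" using xy \<open>c \<noteq> 0\<close> by (auto intro: smult_cancel)
  qed
  show "?f ` ?S = ?T"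
  proof
    show "?f ` ?S \<subseteq> ?T"
      by (auto simp: polys_below_def monic_deg_def intro!: coeff_eq_0)
    show "?T \<subseteq> ?f ` ?S"
    proof
      fix a assume a: "a \<in> ?T"
      then have "lead_coeff a \<noteq> 0" "degree a \<le> N"
        by (auto simp: polys_below_def intro: degree_le)
      then have "smult (inverse (lead_coeff a)) a \<in> (\<Union>d\<le>N. monic_deg d)"
        by (auto simp: monic_deg_def)
      then show "a \<in> ?f ` ?S" using \<open>lead_coeff a \<noteq> 0\<close>
        by (intro image_eqI[of _ _ "(lead_coeff a, smult (inverse (lead_coeff a)) a)"]) auto
    qed
  qed
qed

lemma sum_UN_monic_deg_eq_sum_S_d:
  "(\<Sum>m\<in>(\<Union>d\<le>N. monic_deg d). S_summand \<beta> k m) = (\<Sum>d\<le>N. S_d d \<beta> k :: 'a::{field,finite} poly poly)"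
  unfolding S_d_def S_summand_def
  by (intro sum.UNION_disjoint finite_atMost ballI finite_monic_deg) (auto simp: monic_deg_def)

text \<open>The sum of \<open>S_summand\<close> over all polynomials of degree \<open>\<le> \<beta> + k\<close> vanishes, and
  by homogeneity it equals \<open>(\<Sum>\<^sub>c\<^sub>\<noteq>\<^sub>0 c\<^sup>\<beta>\<^sup>+\<^sup>k) L(\<chi>\<^sub>t\<^sup>\<beta>, -k) = -L(\<chi>\<^sub>t\<^sup>\<beta>, -k)\<close>.\<close>
lemma L_val_eq_0_if_dvd:
  assumes "0 < k" "(CARD('a) - 1) dvd (\<beta> + k)"
  shows "(L_val \<beta> k :: 'a::{field,finite} poly poly) = 0"
proof -
  let ?n = "\<beta> + k" and ?M = "\<Union>d\<le>\<beta> + k. monic_deg d :: 'a poly set"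
  have "?n < Suc ?n * (CARD('a) - 1)"
    using le_mult_CARD_minus_1[where 'a='a, of "Suc ?n"] by linarith
  then have "0 = (\<Sum>a\<in>polys_below (Suc ?n). S_summand \<beta> k a :: 'a poly poly)"
    using sum_polys_below_polyfun_eq_0[OF polyfun_S_summand[where 'a='a, of \<beta> k 0]] by simp
  also have "\<dots> = (\<Sum>a\<in>polys_below (Suc ?n) - {0}. S_summand \<beta> k a)"
    using \<open>0 < k\<close> by (simp add: sum_diff1 finite_polys_below S_summand_def)
  also have "\<dots> = (\<Sum>(c, m)\<in>(UNIV - {0}) \<times> ?M. S_summand \<beta> k (smult c m))"
    using sum.reindex_bij_betw[OF bij_betw_smult_monic[where 'a='a, of ?n], of "S_summand \<beta> k"]
    by (simp add: split_def)
  also have "\<dots> = const2 (\<Sum>c\<in>UNIV - {0}. c ^ ?n) * (\<Sum>m\<in>?M. S_summand \<beta> k m)"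
    by (simp add: sum.cartesian_product[symmetric] S_summand_smult sum_product)
  also have "(\<Sum>c\<in>UNIV - {0::'a}. c ^ ?n) = -1"
    using sum_UNIV_power[where 'a='a, of ?n] assms by (simp add: sum_diff1)
  finally show ?thesis
    by (simp add: sum_UN_monic_deg_eq_sum_S_d L_val_eq_sum_S_d[of \<beta> k ?n])
qed

theorem theorem2p0p3:
  fixes \<beta> k :: nat
  assumes "k > 0"
  shows "((CARD('a) - 1) dvd (\<beta> + k) \<longrightarrow> (L_val \<beta> k :: 'a::{field,finite} poly poly) = 0)
       \<and> (\<not> (CARD('a) - 1) dvd (\<beta> + k) \<longrightarrow> (L_val \<beta> k :: 'a poly poly) \<noteq> 0)
       \<and> ((CARD('a) - 1) dvd (\<beta> + k) \<longrightarrow> (z_deriv_at_1 \<beta> k :: 'a poly poly) \<noteq> 0)"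
proof (intro conjI impI)
  assume "(CARD('a) - 1) dvd (\<beta> + k)"
  then show "(L_val \<beta> k :: 'a poly poly) = 0" using L_val_eq_0_if_dvd assms by blast
next
  assume "\<not> (CARD('a) - 1) dvd (\<beta> + k)"
  then have "eval_origin (L_val \<beta> k :: 'a poly poly) = 1"
    by (simp add: eval_origin_L_val sum_UNIV_power)
  then show "(L_val \<beta> k :: 'a poly poly) \<noteq> 0" by auto
next
  assume "(CARD('a) - 1) dvd (\<beta> + k)"
  then have "eval_origin (z_deriv_at_1 \<beta> k :: 'a poly poly) = 1"
    using assms by (simp add: eval_origin_z_deriv_at_1 sum_UNIV_power)
  then show "(z_deriv_at_1 \<beta> k :: 'a poly poly) \<noteq> 0" by auto
qed

end
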